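(* Let $X,Y$ be topological spaces, $A\subset Y$ a nonempty finite subset, and $C_A^X=X\times A\in M(X,Y)$ the constant multivalued map with value $A$. Then $H_n^M(C_A^X):H_n^M(X)\to H_n^M(Y)$ is the zero homomorphism for every $n>0$.
   Context: A continuous multivalued map $X\to Y$ is a subset $T\subset X\times Y$ such that the restriction of the projection $X\times Y\to X$ to $T$ is proper (universally closed), surjective and has finite fibers; $M(X,Y)$ is the set of these. For $R\in M(X,Y)$, $S\in M(Y,Z)$ the composition $S\circ R\subset X\times Z$ is the image of $(R\times Z)\cap(X\times S)$ under the projection $X\times Y\times Z\to X\times Z$. A continuous single-valued map $f$ is identified with its graph $\mathrm{gr}(f)$. Let $\Delta_n=\{(t_0,\dots,t_n)\in\mathbb{R}^{n+1}: t_i\ge 0,\ \sum t_i=1\}$ and $\delta^n_i:\Delta_{n-1}\to\Delta_n$, $\delta^n_i(t_0,\dots,t_{n-1})=(t_0,\dots,t_{i-1},0,t_i,\dots,t_{n-1})$. Set $S_n^M(X)=M(\Delta_n,X)$, $d^i_n(\alpha)=\alpha\circ\mathrm{gr}(\delta^n_i)$, let $C_n^M(X)$ be the free abelian group on $S_n^M(X)$ with differential $d_n=\sum_{i=0}^n(-1)^i d^i_n$, and $H_n^M(X)=H_n(C_*^M(X))$. For $R\in M(X,Y)$, $H_n^M(R)$ is induced by the chain map $\alpha\mapsto R\circ\alpha$. *)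

theory Defs
  imports "HOL-Homology.Homology"
begin

text \<open>A continuous multivalued map from X to Y: a subset T of X \<times> Y such that the
  first projection restricted to T is proper (closed with compact fibres, i.e.
  universally closed), surjective onto X and has finite fibres.\<close>
definition mvmap :: "'a topology \<Rightarrow> 'b topology \<Rightarrow> ('a \<times> 'b) set \<Rightarrow> bool" where
  "mvmap X Y T \<longleftrightarrow>
     T \<subseteq> topspace X \<times> topspace Y \<and>
     proper_map (subtopology (prod_topology X Y) T) X fst \<and>
     fst ` T = topspace X \<and>
     (\<forall>x \<in> topspace X. finite {y. (x, y) \<in> T})"

text \<open>Composition S \<circ> R of R \<subseteq> X \<times> Y and S \<subseteq> Y \<times> Z is the relational composition R O S.\<close>
definition mvcomp :: "('b \<times> 'c) set \<Rightarrow> ('a \<times> 'b) set \<Rightarrow> ('a \<times> 'c) set" where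
  "mvcomp S R = R O S"

definition graph_on :: "'a set \<Rightarrow> ('a \<Rightarrow> 'b) \<Rightarrow> ('a \<times> 'b) set" where
  "graph_on D f = {(t, f t) | t. t \<in> D}"

abbreviation simplex_top :: "nat \<Rightarrow> (nat \<Rightarrow> real) topology" where
  "simplex_top n \<equiv> subtopology (powertop_real UNIV) (standard_simplex n)"

definition msimplex :: "nat \<Rightarrow> 'a topology \<Rightarrow> ((nat \<Rightarrow> real) \<times> 'a) set \<Rightarrow> bool" where
  "msimplex n X \<alpha> \<longleftrightarrow> mvmap (simplex_top n) X \<alpha>"

definition mface :: "nat \<Rightarrow> nat \<Rightarrow> ((nat \<Rightarrow> real) \<times> 'a) set \<Rightarrow> ((nat \<Rightarrow> real) \<times> 'a) set" where
  "mface n k \<alpha> = mvcomp \<alpha> (graph_on (standard_simplex (n - 1)) (simplical_face k))"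

type_synonym 'a mchain = "((nat \<Rightarrow> real) \<times> 'a) set \<Rightarrow>\<^sub>0 int"

definition mchain :: "nat \<Rightarrow> 'a topology \<Rightarrow> 'a mchain \<Rightarrow> bool" where
  "mchain n X c \<longleftrightarrow> Poly_Mapping.keys c \<subseteq> Collect (msimplex n X)"

definition mboundary :: "nat \<Rightarrow> 'a mchain \<Rightarrow> 'a mchain" where
  "mboundary n c = (if n = 0 then 0 else
     frag_extend (\<lambda>\<alpha>. \<Sum>k\<le>n. frag_cmul ((-1) ^ k) (frag_of (mface n k \<alpha>))) c)"

definition mchain_map :: "('a \<times> 'b) set \<Rightarrow> 'a mchain \<Rightarrow> 'b mchain" where
  "mchain_map R c = frag_extend (\<lambda>\<alpha>. frag_of (mvcomp R \<alpha>)) c"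

definition mcycle :: "nat \<Rightarrow> 'a topology \<Rightarrow> 'a mchain \<Rightarrow> bool" where
  "mcycle n X c \<longleftrightarrow> mchain n X c \<and> mboundary n c = 0"

definition mbounding :: "nat \<Rightarrow> 'a topology \<Rightarrow> 'a mchain \<Rightarrow> bool" where
  "mbounding n X c \<longleftrightarrow> (\<exists>d. mchain (Suc n) X d \<and> mboundary (Suc n) d = c)"

text \<open>H_n^M(R) is the zero homomorphism: every n-cycle is mapped to a boundary.\<close>
definition mhom_zero :: "nat \<Rightarrow> 'a topology \<Rightarrow> 'b topology \<Rightarrow> ('a \<times> 'b) set \<Rightarrow> bool" where
  "mhom_zero n X Y R \<longleftrightarrow> (\<forall>c. mcycle n X c \<longrightarrow> mbounding n Y (mchain_map R c))"

end

theory Submission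
  imports Defs "HOL-Analysis.Abstract_Topological_Spaces"
begin

text \<open>Composing an M-simplex \<alpha> of X with the constant map X \<times> A always yields the constant
  M-simplex \<kappa>(n) = \<Delta>(n) \<times> A, so the induced chain map sends a chain c to \<epsilon>(c) \<kappa>(n), where
  \<epsilon> is the augmentation (sum of coefficients). All faces of \<kappa>(n+1) equal \<kappa>(n), so
  \<partial>\<kappa>(n+1) = \<kappa>(n) when n is odd. When n > 0 is even, \<epsilon>(\<partial>\<alpha>) = \<Sum>(-1)^k over k \<le> n,
  which is 1 for every simplex \<alpha>; hence \<epsilon>(c) = \<epsilon>(\<partial>c) = 0 for every cycle c.\<close>

lemma mvmap_const:
  assumes "A \<subseteq> topspace Y" and "finite A" and "A \<noteq> {}"
  shows "mvmap X Y (topspace X \<times> A)"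
proof -
  have compact: "compact_space (subtopology Y A)"
    by (rule compact_space_subtopology) (simp add: assms finite_imp_compactin)
  have "proper_map (prod_topology X (subtopology Y A)) X fst"
    unfolding proper_map_def
  proof (intro conjI ballI)
    show "closed_map (prod_topology X (subtopology Y A)) X fst"
      using compact by (rule Abstract_Topological_Spaces.closed_map_fst)
  next
    fix x assume x: "x \<in> topspace X"
    have fibre: "{p \<in> topspace (prod_topology X (subtopology Y A)). fst p = x} = {x} \<times> A"
      using x assms(1) by auto
    show "compactin (prod_topology X (subtopology Y A))
            {p \<in> topspace (prod_topology X (subtopology Y A)). fst p = x}"
      unfolding fibre by (rule finite_imp_compactin) (use x assms in auto)
  qed
  moreover have "subtopology (prod_topology X Y) (topspace X \<times> A) = prod_topology X (subtopology Y A)"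
    by (simp add: subtopology_Times)
  ultimately show ?thesis
    unfolding mvmap_def using assms by (auto intro: finite_subset[of _ A])
qed

lemma mvcomp_const:
  assumes "msimplex n X \<alpha>"
  shows "mvcomp (topspace X \<times> A) \<alpha> = standard_simplex n \<times> A"
proof -
  have "\<alpha> \<subseteq> standard_simplex n \<times> topspace X" and "fst ` \<alpha> = standard_simplex n"
    using assms unfolding msimplex_def mvmap_def by auto
  then show ?thesis
    unfolding mvcomp_def by force
qed

lemma mchain_map_const:
  assumes "mchain n X c"
  shows "mchain_map (topspace X \<times> A) c = frag_extend (\<lambda>_. frag_of (standard_simplex n \<times> A)) c"
  unfolding mchain_map_def
  by (rule frag_extend_eq) (use assms in \<open>auto simp: mchain_def mvcomp_const\<close>)

lemma mface_const:
  assumes "k \<le> Suc m"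
  shows "mface (Suc m) k (standard_simplex (Suc m) \<times> A) = standard_simplex m \<times> A"
  using simplical_face_in_standard_simplex[of "Suc m" k] assms
  unfolding mface_def mvcomp_def graph_on_def by force

lemma sum_alternating_frag_cmul:
  "(\<Sum>k\<le>n. frag_cmul ((-1) ^ k) x) = (if even n then x else 0)"
  by (induction n) auto

lemma frag_extend_frag_extend:
  "frag_extend f (frag_extend g c) = frag_extend (\<lambda>x. frag_extend f (g x)) c"
  using subset_UNIV
  by (induction c rule: frag_induction) (auto simp: frag_extend_diff)

lemma mboundary_frag_extend:
  "mboundary n (frag_extend f c) = frag_extend (\<lambda>x. mboundary n (f x)) c"
  by (simp add: mboundary_def frag_extend_frag_extend frag_extend_eq_0)

lemma mboundary_const:
  "mboundary (Suc m) (frag_of (standard_simplex (Suc m) \<times> A))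
     = (if odd m then frag_of (standard_simplex m \<times> A) else 0)"
proof -
  have "mboundary (Suc m) (frag_of (standard_simplex (Suc m) \<times> A))
      = (\<Sum>k\<le>Suc m. frag_cmul ((-1) ^ k) (frag_of (standard_simplex m \<times> A)))"
    unfolding mboundary_def by (auto intro: sum.cong simp: mface_const)
  then show ?thesis
    by (simp add: sum_alternating_frag_cmul)
qed

lemma frag_extend_const_mboundary:
  assumes "n > 0"
  shows "frag_extend (\<lambda>_. x) (mboundary n c) = (if even n then frag_extend (\<lambda>_. x) c else 0)"
proof -
  have "frag_extend (\<lambda>_. x) (mboundary n c)
      = frag_extend (\<lambda>_. \<Sum>k\<le>n. frag_cmul ((-1) ^ k) x) c"
    using assms
    by (simp add: mboundary_def frag_extend_frag_extend frag_extend_sum frag_extend_cmul)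
  then show ?thesis
    by (simp add: sum_alternating_frag_cmul frag_extend_eq_0)
qed

lemma mbounding_const_chain:
  assumes "A \<subseteq> topspace Y" and "finite A" and "A \<noteq> {}"
    and "n > 0" and cycle: "mboundary n c = 0"
  shows "mbounding n Y (frag_extend (\<lambda>_. frag_of (standard_simplex n \<times> A)) c)"
proof (cases "even n")
  case True
  then have "frag_extend (\<lambda>_. frag_of (standard_simplex n \<times> A)) c = 0"
    using frag_extend_const_mboundary[OF \<open>n > 0\<close>, of _ c] cycle by simp
  then show ?thesis
    unfolding mbounding_def mchain_def by (intro exI[of _ 0]) (simp add: mboundary_def)
next
  case False
  let ?d = "frag_extend (\<lambda>_. frag_of (standard_simplex (Suc n) \<times> A)) c"
  have "msimplex (Suc n) Y (standard_simplex (Suc n) \<times> A)"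
    unfolding msimplex_def using mvmap_const[OF assms(1-3), of "simplex_top (Suc n)"] by simp
  then have "mchain (Suc n) Y ?d"
    unfolding mchain_def using keys_frag_extend[of _ c] by fastforce
  moreover have "mboundary (Suc n) ?d = frag_extend (\<lambda>_. frag_of (standard_simplex n \<times> A)) c"
    using False by (simp add: mboundary_frag_extend mboundary_const)
  ultimately show ?thesis
    unfolding mbounding_def by blast
qed

theorem mainTheorem5:
  fixes X :: "'a topology" and Y :: "'b topology" and A :: "'b set" and n :: nat
  assumes "A \<subseteq> topspace Y" and "finite A" and "A \<noteq> {}" and "n > 0"
  shows "mvmap X Y (topspace X \<times> A) \<and> mhom_zero n X Y (topspace X \<times> A)"
proof
  show "mvmap X Y (topspace X \<times> A)"
    using assms(1-3) by (rule mvmap_const)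
  show "mhom_zero n X Y (topspace X \<times> A)"
    unfolding mhom_zero_def mcycle_def
    using mchain_map_const mbounding_const_chain[OF assms] by metis
qed

end
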